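(* Fix $r\in(0,\pi/2)$ and let $s(\ell)=\sin^3\ell$, $s^{(-1)}$ its primitive vanishing at $0$ and $s^{(-2)}$ the primitive of $s^{(-1)}$ vanishing at $0$. Define, for $\ell\in[0,\pi)$ and $\alpha,\beta\in[0,\pi/2)$, \[g(\ell,\alpha,\beta) =\frac43 \ell - \frac{s(\ell)}{9\tan^2r \cos\alpha\cos\beta} -\frac{s^{(-1)}(\ell)}{3\tan r}\left(\frac1{\cos\alpha}+\frac1{\cos\beta}\right)-s^{(-2)}(\ell),\] and $f(\alpha,\beta)=\sup_\ell g(\ell,\alpha,\beta)$. Then: (1) for each fixed $\alpha$, the maximum of $\ell\mapsto g(\ell,\alpha,\alpha)$ is attained at $\ell=2\arctan(\tan r\cos\alpha)$ and only there; (2) for all $\alpha,\beta$, $f(\alpha,\beta)\le \frac12\left(f(\alpha,\alpha)+f(\beta,\beta)\right)$, with equality only for $\alpha=\beta$. *)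

theory Defs
  imports "HOL-Analysis.Analysis"
begin

definition s :: "real \<Rightarrow> real" where
  "s l = (sin l) ^ 3"

definition s1 :: "real \<Rightarrow> real" where
  "s1 l = integral {0..l} s"

definition s2 :: "real \<Rightarrow> real" where
  "s2 l = integral {0..l} s1"

definition g :: "real \<Rightarrow> real \<Rightarrow> real \<Rightarrow> real \<Rightarrow> real" where
  "g r l a b = 4/3 * l - s l / (9 * (tan r)^2 * cos a * cos b)
      - s1 l / (3 * tan r) * (1 / cos a + 1 / cos b) - s2 l"

definition f :: "real \<Rightarrow> real \<Rightarrow> real \<Rightarrow> real" where
  "f r a b = (SUP l\<in>{0..<pi}. g r l a b)"

end

theory Submission
  imports Defs
begin

text \<open>
  In the variables \<open>x = 1 / (tan r * cos a)\<close>, \<open>y = 1 / (tan r * cos b)\<close> and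
  \<open>l = pi - 2 * arctan w\<close>, the closed forms of \<open>s1\<close> and \<open>s2\<close> turn \<open>g\<close> into \<open>4/9 * Q w x y\<close>,
  a quadratic expression in \<open>x, y\<close> built from the 2-jet at \<open>w\<close> of \<open>chi\<close>, which is strictly convex with
  \<open>chi'' \<ge> 0\<close> on \<open>[0, \<infinity>)\<close>. On the diagonal, \<open>chi x - Q w x x\<close> is the tangent gap of \<open>chi\<close> at
  \<open>w\<close> plus \<open>chi'' w * (x - w)^2 / 4\<close>, so the maximum is attained exactly at \<open>w = x\<close>, i.e. at
  \<open>l = 2 * arctan (tan r * cos a)\<close>, with value \<open>4/9 * chi x\<close>.

  Off the diagonal it suffices that \<open>H x y w = chi x + chi y - 2 * Q w x y > 0\<close> for \<open>x \<noteq> y\<close>.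
  If \<open>w\<close> is not strictly between \<open>x\<close> and \<open>y\<close>, \<open>H\<close> is a sum of two tangent gaps and a
  nonnegative term. Otherwise take a minimiser \<open>v\<close> of \<open>H x y\<close> on \<open>[x, y]\<close>: at the endpoints
  \<open>H\<close> is a single tangent gap, and at an interior critical point \<open>y\<close> is the rational function
  \<open>v + partner v (v - x)\<close> of \<open>x\<close> and \<open>v\<close>; along this curve \<open>H\<close> starts at \<open>0\<close> and is strictly
  increasing, by two rational estimates on increments of \<open>chi'\<close>.
\<close>

section \<open>Closed forms and change of variables\<close>

lemma s1_closed_form:
  assumes "0 \<le> l"
  shows "s1 l = 2/3 - cos l + cos l ^ 3 / 3"
proof -
  have "((\<lambda>t. 2/3 - cos t + cos t ^ 3 / 3) has_real_derivative s t) (at t within {0..l})" for t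
  proof -
    have "s t = sin t - cos t ^ 2 * sin t"
      unfolding s_def using sin_cos_squared_add[of t] by algebra
    then show ?thesis by (auto intro!: derivative_eq_intros)
  qed
  from fundamental_theorem_of_calculus[OF assms this[unfolded has_real_derivative_iff_has_vector_derivative]]
  show ?thesis unfolding s1_def by (simp add: integral_unique)
qed

lemma s2_closed_form:
  assumes "0 \<le> l"
  shows "s2 l = 2/3 * l - 2/3 * sin l - sin l ^ 3 / 9"
proof -
  have "((\<lambda>t. 2/3 * t - 2/3 * sin t - sin t ^ 3 / 9) has_real_derivative s1 t) (at t within {0..l})"
    if "t \<in> {0..l}" for t
  proof -
    have "s1 t = 2/3 - cos t + cos t ^ 3 / 3"
      using that by (simp add: s1_closed_form)
    also have "\<dots> = 2/3 - 2/3 * cos t - sin t ^ 2 * cos t / 3"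
      using sin_cos_squared_add[of t] by algebra
    finally have "s1 t = \<dots>" .
    then show ?thesis by (auto intro!: derivative_eq_intros)
  qed
  from fundamental_theorem_of_calculus[OF assms this[unfolded has_real_derivative_iff_has_vector_derivative]]
  show ?thesis unfolding s2_def by (simp add: integral_unique)
qed

definition G :: "real \<Rightarrow> real \<Rightarrow> real \<Rightarrow> real" where
  "G l x y = 4/3 * l - s l * x * y / 9 - s1 l * (x + y) / 3 - s2 l"

lemma g_eq_G:
  assumes "tan r \<noteq> 0" "cos a \<noteq> 0" "cos b \<noteq> 0"
  shows "g r l a b = G l (1 / (tan r * cos a)) (1 / (tan r * cos b))"
  using assms unfolding g_def G_def by (simp add: field_simps power2_eq_square)

lemma G_zero: "G 0 x y = 0"
  unfolding G_def s_def s1_def s2_def by simp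

lemma continuous_on_G: "continuous_on {0..pi} (\<lambda>l. G l x y)"
proof -
  have "continuous_on {0..pi} (\<lambda>l. 4/3 * l - sin l ^ 3 * x * y / 9
      - (2/3 - cos l + cos l ^ 3 / 3) * (x + y) / 3 - (2/3 * l - 2/3 * sin l - sin l ^ 3 / 9))"
    by (intro continuous_intros) auto
  then show ?thesis
    by (rule continuous_on_cong[THEN iffD1, rotated 2])
       (simp_all add: G_def s_def s1_closed_form s2_closed_form)
qed

definition chi :: "real \<Rightarrow> real" where
  "chi z = 3 * pi / 2 - 3 * arctan z + z / (1 + z^2)"

definition chi' :: "real \<Rightarrow> real" where
  "chi' z = - (2 + 4 * z^2) / (1 + z^2)^2"

definition chi'' :: "real \<Rightarrow> real" where
  "chi'' z = 8 * z^3 / (1 + z^2)^3"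

definition chi''' :: "real \<Rightarrow> real" where
  "chi''' z = 24 * z^2 * (1 - z^2) / (1 + z^2)^4"

definition Q :: "real \<Rightarrow> real \<Rightarrow> real \<Rightarrow> real" where
  "Q w x y = chi w + chi' w * (x + y - 2 * w) / 2 - chi'' w * (x - w) * (y - w) / 4"

lemma one_plus_square_pos: "0 < 1 + (z::real)^2"
  by (simp add: add_pos_nonneg)

lemma G_arctan: "G (pi - 2 * arctan w) x y = 4/9 * Q w x y"
proof -
  define l where "l = pi - 2 * arctan w"
  define iD where "iD = 1 / (1 + w^2)"
  have D: "1 + w^2 \<noteq> 0"
    using one_plus_square_pos[of w] by simp
  then have iD: "iD * (1 + w^2) = 1" unfolding iD_def by simp
  have sin_l: "sin l = 2 * w * iD"
    using D unfolding l_def iD_def sin_diff sin_double cos_double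
    by (simp add: sin_arctan cos_arctan power_divide field_simps)
  have cos_l: "cos l = (w^2 - 1) * iD"
    using D unfolding l_def iD_def cos_diff sin_double cos_double
    by (simp add: sin_arctan cos_arctan power_divide field_simps)
  have "0 \<le> l" unfolding l_def using arctan_ubound[of w] by simp
  then have "G l x y = 2/3 * l + 2/3 * sin l + sin l ^ 3 / 9 - sin l ^ 3 * x * y / 9
      - (2/3 - cos l + cos l ^ 3 / 3) * (x + y) / 3"
    unfolding G_def s_def by (simp add: s1_closed_form s2_closed_form algebra_simps)
  moreover have "Q w x y = 3 * pi / 2 - 3 * arctan w + w * iD
      + (- (2 + 4 * w^2) * iD^2) * (x + y - 2 * w) / 2 - 8 * w^3 * iD^3 * (x - w) * (y - w) / 4"
    unfolding Q_def chi_def chi'_def chi''_def iD_def by (simp add: power_divide)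
  \<comment> \<open>18 times the rational identity that remains, with \<open>1 / (1 + w^2)\<close> kept as an atom\<close>
  moreover have "24 * w * iD + 16 * w^3 * iD^3 - 16 * w^3 * iD^3 * x * y
      - (4 - 6 * ((w^2 - 1) * iD) + 2 * ((w^2 - 1) * iD)^3) * (x + y)
    = 8 * (w * iD - (1 + 2 * w^2) * iD^2 * (x + y - 2 * w) - 2 * w^3 * iD^3 * (x - w) * (y - w))"
    using iD by algebra
  ultimately show ?thesis
    unfolding l_def[symmetric] sin_l cos_l by (simp add: l_def field_simps)
qed

section \<open>Convexity of \<open>chi\<close>\<close>

lemma chi_deriv: "(chi has_real_derivative chi' z) (at z)"
proof -
  have "(chi has_real_derivative - 3 * inverse (1 + z^2) + (1 - z^2) / (1 + z^2)^2) (at z)"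
    unfolding chi_def using one_plus_square_pos[of z]
    by (auto intro!: derivative_eq_intros simp: power2_eq_square)
  moreover have "- 3 * inverse (1 + z^2) + (1 - z^2) / (1 + z^2)^2 = chi' z"
  proof -
    define D where "D = 1 + z^2"
    have "D \<noteq> 0" using one_plus_square_pos[of z] unfolding D_def by auto
    then have "- 3 * inverse D + (1 - (D - 1)) / D^2 = - (2 + 4 * (D - 1)) / D^2"
      by (simp add: field_simps power2_eq_square)
    then show ?thesis unfolding chi'_def D_def by simp
  qed
  ultimately show ?thesis by simp
qed

lemma chi'_deriv: "(chi' has_real_derivative chi'' z) (at z)"
  unfolding chi'_def chi''_def using one_plus_square_pos[of z]
  by (auto intro!: derivative_eq_intros simp: field_simps) (simp add: algebra_simps eval_nat_numeral)

lemma chi''_deriv: "(chi'' has_real_derivative chi''' z) (at z)"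
  unfolding chi''_def chi'''_def using one_plus_square_pos[of z]
  by (auto intro!: derivative_eq_intros simp: field_simps) (simp add: algebra_simps eval_nat_numeral)

lemma chi''_nonneg: "0 \<le> z \<Longrightarrow> 0 \<le> chi'' z"
  unfolding chi''_def using one_plus_square_pos[of z] by simp

lemma chi'_strict_mono:
  assumes "0 \<le> q" "q < p"
  shows "chi' q < chi' p"
proof (rule DERIV_pos_imp_increasing_open[OF assms(2)])
  fix z assume "q < z" "z < p"
  then have "0 < chi'' z" unfolding chi''_def using assms(1) one_plus_square_pos[of z] by simp
  then show "\<exists>d. (chi' has_real_derivative d) (at z) \<and> 0 < d" using chi'_deriv by blast
qed (meson DERIV_isCont chi'_deriv continuous_at_imp_continuous_on)

lemma chi_above_tangent:
  assumes "0 \<le> w" "0 \<le> z" "z \<noteq> w"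
  shows "chi w + chi' w * (z - w) < chi z"
proof (cases "w < z")
  case True
  then obtain c where "w < c" "c < z" "chi z - chi w = (z - w) * chi' c"
    using MVT2[OF True chi_deriv] by blast
  moreover have "(z - w) * chi' w < (z - w) * chi' c"
    using chi'_strict_mono assms \<open>w < c\<close> True by simp
  ultimately show ?thesis by (simp add: algebra_simps)
next
  case False
  then have "z < w" using assms by simp
  then obtain c where "z < c" "c < w" "chi w - chi z = (w - z) * chi' c"
    using MVT2[OF \<open>z < w\<close> chi_deriv] by blast
  moreover have "(w - z) * chi' c < (w - z) * chi' w"
    using chi'_strict_mono assms \<open>z < c\<close> \<open>c < w\<close> by simp
  ultimately show ?thesis by (simp add: algebra_simps)
qed

lemma chi_pos: "0 \<le> z \<Longrightarrow> 0 < chi z"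
  unfolding chi_def using arctan_ubound[of z] one_plus_square_pos[of z]
  by (simp add: add_pos_nonneg)

lemma Q_diag [simp]: "Q z z z = chi z"
  unfolding Q_def by simp

lemma Q_diag_lt_chi:
  assumes "0 \<le> w" "0 \<le> x" "w \<noteq> x"
  shows "Q w x x < chi x"
proof -
  have "Q w x x = chi w + chi' w * (x - w) - chi'' w * (x - w)^2 / 4"
    unfolding Q_def by (simp add: field_simps power2_eq_square)
  moreover have "0 \<le> chi'' w * (x - w)^2 / 4"
    using chi''_nonneg assms by simp
  ultimately show ?thesis
    using chi_above_tangent[of w x] assms by simp
qed

section \<open>Positivity of \<open>H\<close>\<close>

definition H :: "real \<Rightarrow> real \<Rightarrow> real \<Rightarrow> real" where
  "H x y w = chi x + chi y - 2 * Q w x y"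

lemma H_sym: "H x y w = H y x w"
  unfolding H_def Q_def by (simp add: algebra_simps)

lemma H_eq_tangent_gaps:
  "H x y w = (chi x - chi w - chi' w * (x - w)) + (chi y - chi w - chi' w * (y - w))
     + chi'' w / 2 * ((x - w) * (y - w))"
  unfolding H_def Q_def by (simp add: field_simps)

lemma H_pos_outside:
  assumes "0 \<le> x" "0 \<le> y" "x \<noteq> y" "0 \<le> w" "0 \<le> (x - w) * (y - w)"
  shows "0 < H x y w"
proof -
  have "0 \<le> chi'' w / 2 * ((x - w) * (y - w))"
    using assms chi''_nonneg[of w] by simp
  moreover have "0 \<le> chi x - chi w - chi' w * (x - w)" "0 \<le> chi y - chi w - chi' w * (y - w)"
    using chi_above_tangent[of w x] chi_above_tangent[of w y] assms
    by (cases "x = w"; cases "y = w"; simp)+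
  moreover have "0 < chi x - chi w - chi' w * (x - w) \<or> 0 < chi y - chi w - chi' w * (y - w)"
    using chi_above_tangent[of w x] chi_above_tangent[of w y] assms by (cases "x = w") auto
  ultimately show ?thesis unfolding H_eq_tangent_gaps by linarith
qed

definition critical_poly :: "real \<Rightarrow> real \<Rightarrow> real \<Rightarrow> real" where
  "critical_poly x y v = (1 - v^2) * (x - v) * (y - v) - v * (1 + v^2) * (x + y - 2 * v)"

lemma H_deriv:
  "((\<lambda>v. H x y v) has_real_derivative 12 * v^2 / (1 + v^2)^4 * critical_poly x y v) (at v)"
proof -
  have "((\<lambda>v. H x y v) has_real_derivative
      - 2 * chi' v - (chi'' v * (x + y - 2 * v) - 2 * chi' v)
      + (chi''' v * (x - v) * (y - v) - chi'' v * (x + y - 2 * v)) / 2) (at v)"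
    unfolding H_def Q_def
    by (auto intro!: derivative_eq_intros chi_deriv chi'_deriv chi''_deriv simp: field_simps)
  moreover have "- 2 * chi' v - (chi'' v * (x + y - 2 * v) - 2 * chi' v)
      + (chi''' v * (x - v) * (y - v) - chi'' v * (x + y - 2 * v)) / 2
    = 12 * v^2 / (1 + v^2)^4 * critical_poly x y v"
    unfolding chi''_def chi'''_def critical_poly_def using one_plus_square_pos[of v]
    by (simp add: field_simps) (simp add: algebra_simps eval_nat_numeral)
  ultimately show ?thesis by simp
qed

definition partner :: "real \<Rightarrow> real \<Rightarrow> real" where
  "partner w t = w * (1 + w^2) * t / (w * (1 + w^2) + (1 - w^2) * t)"

lemma partner_denom_pos:
  fixes w t :: real
  assumes "0 < w" "0 \<le> t" "t < w"
  shows "0 < w * (1 + w^2) + (1 - w^2) * t"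
proof -
  have "w^2 * t \<le> w^2 * w" using assms by (intro mult_left_mono) auto
  moreover have "w * (1 + w^2) + (1 - w^2) * t = w + t + (w^2 * w - w^2 * t)"
    by (simp add: algebra_simps)
  ultimately show ?thesis using assms by linarith
qed

lemma critical_poly_zero_imp_partner:
  assumes "0 < u" "u < v" "critical_poly (v - u) y v = 0"
  shows "y = v + partner v u"
proof -
  have "(y - v) * (v * (1 + v^2) + (1 - v^2) * u) = v * (1 + v^2) * u"
    using assms(3) unfolding critical_poly_def by (simp add: algebra_simps)
  then show ?thesis
    unfolding partner_def using partner_denom_pos[of v u] assms by (simp add: field_simps)
qed

lemma partner_deriv:
  assumes "0 < w" "0 \<le> t" "t < w"
  shows "(partner w has_real_derivative
           (w * (1 + w^2))^2 / (w * (1 + w^2) + (1 - w^2) * t)^2) (at t)"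
  unfolding partner_def using partner_denom_pos[OF assms]
  by (auto intro!: derivative_eq_intros simp: field_simps power2_eq_square)

lemma chi'_decrement_gt_partner:
  fixes w t :: real
  assumes "0 < w" "0 < t" "t < w"
  shows "chi'' w / 2 * partner w t < chi' w - chi' (w - t)"
proof -
  define x where "x = w - t"
  define W1 where "W1 = 1 + w^2"
  define X1 where "X1 = 1 + x^2"
  define D0 where "D0 = w * (1 + w^2) + (1 - w^2) * t"
  define b1r where "b1r = 2 * x * (t^3 + 2 * w * (w - t) * (w + t)) + 4 * w^3 * x^3"
  have xp: "x > 0" using assms unfolding x_def by simp
  have W1p: "W1 > 0" unfolding W1_def by (rule one_plus_square_pos)
  have X1p: "X1 > 0" unfolding X1_def by (rule one_plus_square_pos)
  have D0p: "D0 > 0" unfolding D0_def using partner_denom_pos[of w t] assms by simp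
  have b1p: "b1r > 0"
  proof -
    have "t^3 + 2 * w * (w - t) * (w + t) > 0" using assms by (simp add: add_pos_pos)
    then show ?thesis unfolding b1r_def using xp assms by (simp add: add_pos_pos)
  qed
  have e1: "chi' w = - (2 + 4 * w^2) / W1^2" unfolding chi'_def W1_def ..
  have e2: "chi' (w - t) = - (2 + 4 * x^2) / X1^2" unfolding chi'_def X1_def x_def ..
  have e3: "chi'' w = 8 * w^3 / W1^3" unfolding chi''_def W1_def ..
  have e4: "partner w t = w * W1 * t / D0" unfolding partner_def W1_def D0_def ..
  have poly: "(- (2 + 4 * w^2) * X1^2 + (2 + 4 * x^2) * W1^2) * D0 - 4 * w^4 * t * X1^2 = t * b1r * W1"
    unfolding W1_def X1_def D0_def b1r_def x_def by algebra
  have "chi' w - chi' (w - t) - chi'' w / 2 * partner w t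
     = ((- (2 + 4 * w^2) * X1^2 + (2 + 4 * x^2) * W1^2) * D0 - 4 * w^4 * t * X1^2) / (W1^2 * X1^2 * D0)"
    unfolding e1 e2 e3 e4 using W1p X1p D0p
    by (simp add: field_simps eval_nat_numeral)
  also have "\<dots> = t * b1r / (W1 * X1^2 * D0)"
    unfolding poly using W1p by (simp add: field_simps power2_eq_square)
  finally have "chi' w - chi' (w - t) - chi'' w / 2 * partner w t = t * b1r / (W1 * X1^2 * D0)" .
  moreover have "t * b1r / (W1 * X1^2 * D0) > 0" using assms b1p W1p X1p D0p by simp
  ultimately show ?thesis by linarith
qed

lemma partner_increment_numerator_pos:
  fixes w t :: real
  assumes "0 < t" "t < w"
  shows "0 < 4 * w^6 * (w - t) + 2 * w^2 * (4 * w^3 + 4 * t * w * (w - t) - t^3)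
           + (4 * w^3 + 12 * t * w^2 + 8 * t^2 * w - 2 * t^3)"
proof -
  have "t^3 < w^3" "0 < w^3" using assms by (simp_all add: power_strict_mono)
  moreover have "0 \<le> 4 * t * w * (w - t)" "0 \<le> 12 * t * w^2 + 8 * t^2 * w"
    using assms by simp_all
  ultimately have "0 < 4 * w^3 + 4 * t * w * (w - t) - t^3"
    "0 < 4 * w^3 + 12 * t * w^2 + 8 * t^2 * w - 2 * t^3"
    by linarith+
  moreover have "0 \<le> 4 * w^6 * (w - t)" "0 < 2 * w^2" using assms by simp_all
  ultimately show ?thesis by (simp add: add_nonneg_pos)
qed

lemma partner_shift_eq:
  fixes w t :: real
  assumes "0 < w" "0 \<le> t" "t < w"
  shows "w + partner w t = w * (w + w^3 + 2 * t) / (w * (1 + w^2) + (1 - w^2) * t)"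
  unfolding partner_def using partner_denom_pos[OF assms]
  by (simp add: field_simps power2_eq_square power3_eq_cube)

lemma chi'_increment_gt_partner:
  fixes w t :: real
  assumes "0 < w" "0 < t" "t < w"
  shows "chi'' w / 2 * t < chi' (w + partner w t) - chi' w"
proof -
  define W1 where "W1 = 1 + w^2"
  define D0 where "D0 = w * (1 + w^2) + (1 - w^2) * t"
  define E where "E = w + w^3 + 2 * t"
  define Yr where "Yr = t^2 + 2 * t * w + w^4 + w^2"
  define b2r where "b2r = 4 * w^6 * (w - t) + 2 * w^2 * (4 * w^3 + 4 * t * w * (w - t) - t^3)
     + (4 * w^3 + 12 * t * w^2 + 8 * t^2 * w - 2 * t^3)"
  have W1p: "W1 > 0" unfolding W1_def by (rule one_plus_square_pos)
  have D0p: "D0 > 0" unfolding D0_def using partner_denom_pos[of w t] assms by simp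
  have Ep: "E > 0" unfolding E_def using assms by (simp add: add_pos_pos)
  have Yrp: "Yr > 0" unfolding Yr_def using assms by (simp add: add_pos_pos)
  have b2p: "b2r > 0" unfolding b2r_def using partner_increment_numerator_pos assms by simp
  have y: "w + partner w t = w * E / D0"
    unfolding E_def D0_def using partner_shift_eq assms by simp
  have "D0^2 + w^2 * E^2 = W1^2 * Yr" unfolding D0_def E_def W1_def Yr_def by algebra
  then have "1 + (w * E / D0)^2 = W1^2 * Yr / D0^2"
    using D0p by (simp add: field_simps power_mult_distrib)
  then have e1: "chi' (w + partner w t) = - (2 * D0^2 + 4 * w^2 * E^2) * D0^2 / (W1^4 * Yr^2)"
    unfolding chi'_def y using D0p W1p Yrp by (simp add: power_divide field_simps eval_nat_numeral)
  have e2: "chi' w = - (2 + 4 * w^2) / W1^2" unfolding chi'_def W1_def ..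
  have e3: "chi'' w = 8 * w^3 / W1^3" unfolding chi''_def W1_def ..
  have poly: "- (2 * D0^2 + 4 * w^2 * E^2) * D0^2 + (2 + 4 * w^2) * W1^2 * Yr^2 - 4 * w^3 * t * W1 * Yr^2
     = t * w^3 * E * b2r"
    unfolding D0_def E_def W1_def Yr_def b2r_def by algebra
  have "chi' (w + partner w t) - chi' w - chi'' w / 2 * t
     = (- (2 * D0^2 + 4 * w^2 * E^2) * D0^2 + (2 + 4 * w^2) * W1^2 * Yr^2 - 4 * w^3 * t * W1 * Yr^2) / (W1^4 * Yr^2)"
    unfolding e1 e2 e3 using W1p Yrp by (simp add: field_simps eval_nat_numeral)
  also have "\<dots> = t * w^3 * E * b2r / (W1^4 * Yr^2)" unfolding poly ..
  also have "\<dots> > 0" using assms Ep b2p W1p Yrp by simp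
  finally show ?thesis by simp
qed

lemma H_along_curve_deriv:
  assumes "(p has_real_derivative d) (at t)"
  shows "((\<lambda>t. H (w - t) (w + p t) w) has_real_derivative
           (chi' w - chi' (w - t) - chi'' w / 2 * p t)
           + d * (chi' (w + p t) - chi' w - chi'' w / 2 * t)) (at t)"
proof -
  have "(\<lambda>t. H (w - t) (w + p t) w)
      = (\<lambda>t. chi (w - t) + chi (w + p t) - 2 * chi w - chi' w * (p t - t) - chi'' w / 2 * (t * p t))"
    unfolding H_def Q_def by (simp add: fun_eq_iff field_simps)
  then show ?thesis
    by (auto intro!: derivative_eq_intros DERIV_chain2[OF chi_deriv] assms simp: algebra_simps)
qed

lemma H_pos_on_partner_curve:
  fixes w u :: real
  assumes "0 < u" "u < w"
  shows "0 < H (w - u) (w + partner w u) w"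
proof -
  define V where "V t = H (w - t) (w + partner w t) w" for t
  have "V 0 < V u"
  proof (rule DERIV_pos_imp_increasing_open[OF assms(1)])
    fix t assume t: "0 < t" "t < u"
    define d where "d = (w * (1 + w^2))^2 / (w * (1 + w^2) + (1 - w^2) * t)^2"
    have "0 < d"
      unfolding d_def using partner_denom_pos[of w t] one_plus_square_pos[of w] t assms by simp
    moreover have "(V has_real_derivative
        (chi' w - chi' (w - t) - chi'' w / 2 * partner w t)
        + d * (chi' (w + partner w t) - chi' w - chi'' w / 2 * t)) (at t)"
      unfolding V_def d_def using partner_deriv t assms by (intro H_along_curve_deriv) simp
    moreover have "0 < chi' w - chi' (w - t) - chi'' w / 2 * partner w t"
      "0 < chi' (w + partner w t) - chi' w - chi'' w / 2 * t"
      using chi'_decrement_gt_partner[of w t] chi'_increment_gt_partner[of w t] t assms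
      by simp_all
    ultimately show "\<exists>y. (V has_real_derivative y) (at t) \<and> 0 < y"
      by (blast intro: add_pos_pos mult_pos_pos)
  next
    have "isCont V t" if "t \<in> {0..u}" for t
      unfolding V_def using that assms
      by (intro DERIV_isCont[OF H_along_curve_deriv[OF partner_deriv]]) auto
    then show "continuous_on {0..u} V"
      by (simp add: continuous_at_imp_continuous_on)
  qed
  moreover have "V 0 = 0"
    unfolding V_def partner_def H_def by simp
  ultimately show ?thesis unfolding V_def by simp
qed

lemma H_pos_at_critical_point:
  assumes "0 < x" "x < v" "v < y" "critical_poly x y v = 0"
  shows "0 < H x y v"
proof -
  have "y = v + partner v (v - x)"
    using assms by (intro critical_poly_zero_imp_partner) auto
  then show ?thesis
    using H_pos_on_partner_curve[of "v - x" v] assms by simp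
qed

lemma H_pos_between:
  assumes "0 < x" "x < w" "w < y"
  shows "0 < H x y w"
proof -
  have "continuous_on {x..y} (\<lambda>v. H x y v)"
    by (intro continuous_at_imp_continuous_on ballI DERIV_isCont[OF H_deriv])
  moreover have "{x..y} \<noteq> {}" using assms by simp
  ultimately obtain v where v: "v \<in> {x..y}" and v_min: "\<forall>z\<in>{x..y}. H x y v \<le> H x y z"
    using continuous_attains_inf[OF compact_Icc] by blast
  have "0 < H x y v"
  proof (cases "v = x \<or> v = y")
    case True
    then show ?thesis using H_pos_outside[of x y v] assms v by auto
  next
    case False
    with v have inner: "x < v" "v < y" by auto
    have "12 * v^2 / (1 + v^2)^4 * critical_poly x y v = 0"
    proof (rule DERIV_local_min[OF H_deriv])
      show "0 < min (v - x) (y - v)" using inner by simp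
      show "\<forall>z. \<bar>v - z\<bar> < min (v - x) (y - v) \<longrightarrow> H x y v \<le> H x y z"
        using v_min by (auto simp: abs_less_iff)
    qed
    moreover have "12 * v^2 / (1 + v^2)^4 \<noteq> 0"
      using inner assms one_plus_square_pos[of v] by simp
    ultimately show ?thesis
      using H_pos_at_critical_point[of x v y] inner assms by simp
  qed
  also have "H x y v \<le> H x y w" using v_min assms by simp
  finally show ?thesis .
qed

lemma H_pos:
  assumes "0 < x" "0 < y" "x \<noteq> y" "0 \<le> w"
  shows "0 < H x y w"
proof (cases "0 \<le> (x - w) * (y - w)")
  case True
  then show ?thesis using H_pos_outside[of x y w] assms by simp
next
  case False
  then have "(x - w) * (y - w) < 0" by simp
  then consider "x < w" "w < y" | "y < w" "w < x"
    by (force simp: mult_less_0_iff)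
  then show ?thesis
  proof cases
    case 1
    then show ?thesis using H_pos_between[of x w y] assms by simp
  next
    case 2
    then show ?thesis using H_pos_between[of y w x] H_sym[of x y w] assms by simp
  qed
qed

section \<open>Maxima over \<open>l\<close>\<close>

lemma pi_minus_two_arctan_cases:
  assumes "0 < l" "l \<le> pi"
  obtains w where "0 \<le> w" "l = pi - 2 * arctan w"
proof
  have "0 \<le> (pi - l) / 2" "(pi - l) / 2 < pi / 2" using assms by auto
  then show "0 \<le> tan ((pi - l) / 2)" "l = pi - 2 * arctan (tan ((pi - l) / 2))"
    by (simp_all add: tan_pos_pi2_le arctan_tan field_simps)
qed

lemma G_diag_lt_max:
  assumes "0 < x" "0 \<le> l" "l < pi" "l \<noteq> pi - 2 * arctan x"
  shows "G l x x < 4/9 * chi x"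
proof (cases "l = 0")
  case True
  then show ?thesis using G_zero chi_pos[of x] assms by simp
next
  case False
  with assms have "0 < l" "l \<le> pi" by simp_all
  then obtain w where "0 \<le> w" "l = pi - 2 * arctan w"
    by (rule pi_minus_two_arctan_cases)
  moreover from this have "w \<noteq> x" using assms(4) by auto
  ultimately show ?thesis using Q_diag_lt_chi[of w x] assms(1) by (simp add: G_arctan)
qed

lemma G_lt_mean:
  assumes "0 < x" "0 < y" "x \<noteq> y" "0 \<le> l" "l \<le> pi"
  shows "G l x y < 4/9 * ((chi x + chi y) / 2)"
proof (cases "l = 0")
  case True
  then show ?thesis using G_zero chi_pos[of x] chi_pos[of y] assms by simp
next
  case False
  with assms have "0 < l" by simp
  then obtain w where "0 \<le> w" "l = pi - 2 * arctan w"
    using assms(5) by (rule pi_minus_two_arctan_cases)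
  then show ?thesis using H_pos[of x y w] assms(1-3) by (simp add: G_arctan H_def)
qed

lemma SUP_G_diag:
  assumes "0 < x"
  shows "(SUP l\<in>{0..<pi}. G l x x) = 4/9 * chi x"
proof (rule cSup_eq_maximum)
  have "0 < arctan x" using assms by simp
  then have "pi - 2 * arctan x \<in> {0..<pi}" using arctan_ubound[of x] by simp
  moreover have "G (pi - 2 * arctan x) x x = 4/9 * chi x" by (simp add: G_arctan)
  ultimately show "4/9 * chi x \<in> (\<lambda>l. G l x x) ` {0..<pi}"
    by (metis image_eqI)
next
  fix z assume "z \<in> (\<lambda>l. G l x x) ` {0..<pi}"
  then obtain l where l: "l \<in> {0..<pi}" "z = G l x x" by blast
  show "z \<le> 4/9 * chi x"
  proof (cases "l = pi - 2 * arctan x")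
    case True
    then show ?thesis using l by (simp add: G_arctan)
  next
    case False
    then show ?thesis using G_diag_lt_max[OF assms, of l] l by simp
  qed
qed

lemma SUP_G_lt_mean:
  assumes "0 < x" "0 < y" "x \<noteq> y"
  shows "(SUP l\<in>{0..<pi}. G l x y) < 4/9 * ((chi x + chi y) / 2)"
proof -
  have "{0..pi} \<noteq> {}" using pi_gt_zero by simp
  then obtain l0 where "l0 \<in> {0..pi}" and l0_max: "\<forall>l\<in>{0..pi}. G l x y \<le> G l0 x y"
    using continuous_attains_sup[OF compact_Icc _ continuous_on_G] by blast
  have "(SUP l\<in>{0..<pi}. G l x y) \<le> G l0 x y"
    using l0_max pi_gt_zero by (intro cSUP_least) auto
  also have "\<dots> < 4/9 * ((chi x + chi y) / 2)"
    using G_lt_mean assms \<open>l0 \<in> {0..pi}\<close> by simp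
  finally show ?thesis .
qed

lemma two_arctan_eq_pi_minus:
  "0 < c \<Longrightarrow> 2 * arctan c = pi - 2 * arctan (1 / c)"
  using arctan_inverse[of c] by (simp add: inverse_eq_divide)

lemma g_lt_g_max:
  assumes "0 < tan r" "0 < cos a" "0 \<le> l" "l < pi" "l \<noteq> 2 * arctan (tan r * cos a)"
  shows "g r l a a < g r (2 * arctan (tan r * cos a)) a a"
proof -
  define x where "x = 1 / (tan r * cos a)"
  have "0 < x" unfolding x_def using assms by simp
  moreover have l_max: "2 * arctan (tan r * cos a) = pi - 2 * arctan x"
    unfolding x_def by (rule two_arctan_eq_pi_minus) (use assms in simp)
  ultimately show ?thesis
    using G_diag_lt_max[of x l] assms
    by (simp add: g_eq_G x_def[symmetric] G_arctan)
qed

lemma f_eq_SUP_G: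
  assumes "tan r \<noteq> 0" "cos a \<noteq> 0" "cos b \<noteq> 0"
  shows "f r a b = (SUP l\<in>{0..<pi}. G l (1 / (tan r * cos a)) (1 / (tan r * cos b)))"
  unfolding f_def using g_eq_G assms by simp

lemma f_diag:
  assumes "0 < tan r" "0 < cos a"
  shows "f r a a = 4/9 * chi (1 / (tan r * cos a))"
  using assms by (simp add: f_eq_SUP_G SUP_G_diag)

lemma f_lt_mean:
  assumes "0 < tan r" "0 < cos a" "0 < cos b" "cos a \<noteq> cos b"
  shows "f r a b < (f r a a + f r b b) / 2"
  using SUP_G_lt_mean[of "1 / (tan r * cos a)" "1 / (tan r * cos b)"] assms
  unfolding f_diag[OF assms(1,2)] f_diag[OF assms(1,3)] by (simp add: f_eq_SUP_G)

theorem lemma4: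
  fixes r :: real
  assumes "0 < r" and "r < pi / 2"
  shows "(\<forall>a\<in>{0..<pi/2}.
            2 * arctan (tan r * cos a) \<in> {0..<pi} \<and>
            (\<forall>l\<in>{0..<pi}. l \<noteq> 2 * arctan (tan r * cos a) \<longrightarrow>
                g r l a a < g r (2 * arctan (tan r * cos a)) a a))
       \<and> (\<forall>a\<in>{0..<pi/2}. \<forall>b\<in>{0..<pi/2}.
            f r a b \<le> (f r a a + f r b b) / 2 \<and>
            (f r a b = (f r a a + f r b b) / 2 \<longrightarrow> a = b))"
proof -
  have tan_r: "0 < tan r" using assms by (simp add: tan_gt_zero)
  have cos_pos: "0 < cos a" if "a \<in> {0..<pi/2}" for a
    using that by (intro cos_gt_zero_pi) auto
  have cos_ne: "cos a \<noteq> cos b" if "a \<in> {0..<pi/2}" "b \<in> {0..<pi/2}" "a \<noteq> b" for a b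
  proof
    assume "cos a = cos b"
    then show False using cos_inj_pi[of a b] that by simp
  qed
  have part1: "2 * arctan (tan r * cos a) \<in> {0..<pi} \<and>
      (\<forall>l\<in>{0..<pi}. l \<noteq> 2 * arctan (tan r * cos a) \<longrightarrow>
         g r l a a < g r (2 * arctan (tan r * cos a)) a a)"
    if a: "a \<in> {0..<pi/2}" for a
    using tan_r cos_pos[OF a] arctan_ubound[of "tan r * cos a"] g_lt_g_max[of r a]
    by simp
  have part2: "f r a b \<le> (f r a a + f r b b) / 2 \<and>
      (f r a b = (f r a a + f r b b) / 2 \<longrightarrow> a = b)"
    if a: "a \<in> {0..<pi/2}" and b: "b \<in> {0..<pi/2}" for a b
  proof (cases "a = b")
    case False
    then show ?thesis
      using f_lt_mean[OF tan_r cos_pos[OF a] cos_pos[OF b] cos_ne[OF a b False]] by simp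
  qed simp
  show ?thesis using part1 part2 by blast
qed

end
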